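(* Let $p$ be an odd prime, let $l>2$ be an integer with $l\mid p-1$, and let $\omega$ be a primitive $l$-th root of unity in $\mathbb{F}_p$. Let $n=lp$ if $l$ is even and $n=2lp$ if $l$ is odd. For each $(r_1,r_2,r_3)\in\{(2,1,1),(1,2,1),(1,1,2)\}$, the cyclic code $\mathcal{C}_{(r_1,r_2,r_3)}$ of length $n$ over $\mathbb{F}_p$ generated by $(x-1)^{r_1}(x+1)^{r_2}(x-\omega)^{r_3}$ is an MDS symbol-pair code with minimum symbol-pair distance $d_p=6$.
   Context: For $\mathbf{x}=(x_0,\dots,x_{n-1})\in\mathbb{F}_p^n$, the symbol-pair weight is $\omega_p(\mathbf{x})=|\{i:(x_i,x_{i+1})\neq(0,0)\}|$ (indices modulo $n$), and the symbol-pair distance is $D_p(\mathbf{x},\mathbf{y})=|\{i:(x_i,x_{i+1})\neq(y_i,y_{i+1})\}|$. The minimum symbol-pair distance $d_p(\mathcal{C})$ is the minimum of $D_p$ over distinct codewords. A code of length $n$ with minimum symbol-pair distance $d_p$ is an MDS symbol-pair code if $|\mathcal{C}|=p^{n-d_p+2}$. Vectors are identified with polynomials in $\mathbb{F}_p[x]/\langle x^n-1\rangle$; the cyclic code generated by $g(x)\mid x^n-1$ is the ideal $\langle g(x)\rangle$. *)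

theory Defs
  imports "HOL-Computational_Algebra.Polynomial" "HOL-Library.Cardinality"
begin

text \<open>Vectors of length n over a field are identified with polynomials of degree < n
 (residues modulo x^n - 1); the i-th coordinate is coeff c i, indices taken mod n.\<close>

definition cyclic_code :: "nat \<Rightarrow> 'a::field poly \<Rightarrow> 'a poly set" where
  "cyclic_code n g = {(a * g) mod (monom 1 n - 1) | a. True}"

definition pair_weight :: "nat \<Rightarrow> 'a::zero poly \<Rightarrow> nat" where
  "pair_weight n x = card {i. i < n \<and> (coeff x i, coeff x (Suc i mod n)) \<noteq> (0, 0)}"

definition pair_dist :: "nat \<Rightarrow> 'a::zero poly \<Rightarrow> 'a poly \<Rightarrow> nat" where
  "pair_dist n x y = card {i. i < n \<and>
     (coeff x i, coeff x (Suc i mod n)) \<noteq> (coeff y i, coeff y (Suc i mod n))}"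

definition min_pair_dist :: "nat \<Rightarrow> 'a::zero poly set \<Rightarrow> nat" where
  "min_pair_dist n C = Min {pair_dist n x y | x y. x \<in> C \<and> y \<in> C \<and> x \<noteq> y}"

definition mds_pair_code :: "nat \<Rightarrow> 'a::{zero,finite} poly set \<Rightarrow> bool" where
  "mds_pair_code n C \<longleftrightarrow> card C = CARD('a) ^ (n - min_pair_dist n C + 2)"

definition primitive_root_of_unity :: "nat \<Rightarrow> 'a::field \<Rightarrow> bool" where
  "primitive_root_of_unity l w \<longleftrightarrow> 0 < l \<and> w ^ l = 1 \<and> (\<forall>k. 0 < k \<and> k < l \<longrightarrow> w ^ k \<noteq> 1)"

end

theory Submission
  imports Defs
begin

text \<open>
  Every codeword c of the cyclic code generated by g = (x - a)^2 (x - s) (x - t), where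
  {a, s, t} = {1, -1, \<omega>}, satisfies c(1) = c(-1) = c(\<omega>) = 0 and c'(a) = 0. Cyclic shifts
  preserve the code and the pair weight, so a codeword of pair weight at most 5 < n can be
  shifted to have constant coefficient 0; its pair weight is then the size of T \<union> (T - 1)
  for its support T, which forces one of three shapes. A support inside four consecutive
  positions b, ..., b + 3 makes c the product of x^b and a multiple of g of degree below 4,
  hence zero. A support {u, v} gives z^(v - u) = 1 at all three roots, and the condition at
  the double root gives p dvd v - u, so n dvd v - u, which is impossible. A support
  {s', t, t + 1} contradicts the evaluations at 1 and -1 because 2 is invertible. The generator
  itself has pair weight 6, and the code has p^(n - 4) words, which is the MDS bound for d_p = 6.
\<close>

section \<open>Symbol-pair weight and cyclic codes\<close>

lemma card_polys_degree_less:
  assumes "0 < k"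
  shows "card {c :: 'a::{zero,finite} poly. degree c < k} = CARD('a) ^ k"
proof -
  have "bij_betw Poly {xs :: 'a list. length xs = k} {c. degree c < k}"
  proof (rule bij_betw_byWitness[where f' = "\<lambda>c. map (coeff c) [0..<k]"])
    show "\<forall>xs\<in>{xs. length xs = k}. map (coeff (Poly xs)) [0..<k] = xs"
      by (simp add: list_eq_iff_nth_eq nth_default_nth)
    show "\<forall>c\<in>{c. degree c < k}. Poly (map (coeff c) [0..<k]) = c"
      by (auto intro!: poly_eqI simp: nth_default_def coeff_eq_0)
    have "degree (Poly xs) < k" if "length xs = k" for xs :: "'a list"
    proof -
      have "degree (Poly xs) \<le> k - 1"
        using that by (intro degree_le) (auto simp: nth_default_def)
      then show ?thesis
        using assms by simp
    qed
    then show "Poly ` {xs :: 'a list. length xs = k} \<subseteq> {c. degree c < k}"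
      by blast
  qed auto
  then have "card {c :: 'a poly. degree c < k} = card {xs :: 'a list. length xs = k}"
    by (simp add: bij_betw_same_card)
  also have "\<dots> = CARD('a) ^ k"
    using card_lists_length_eq[of "UNIV :: 'a set" k] by simp
  finally show ?thesis .
qed

lemma pair_dist_eq_pair_weight_diff:
  fixes x y :: "'a::ab_group_add poly"
  shows "pair_dist n x y = pair_weight n (x - y)"
  by (simp add: pair_dist_def pair_weight_def)

lemma pair_dist_le: "pair_dist n x y \<le> n"
  unfolding pair_dist_def by (rule card_mono[of "{..<n}", simplified]) auto

lemma min_pair_dist_eqI:
  assumes "\<And>x y. x \<in> C \<Longrightarrow> y \<in> C \<Longrightarrow> x \<noteq> y \<Longrightarrow> d \<le> pair_dist n x y"
    and "x \<in> C" and "y \<in> C" and "x \<noteq> y" and "pair_dist n x y = d"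
  shows "min_pair_dist n C = d"
  unfolding min_pair_dist_def
proof (rule Min_eqI)
  show "finite {pair_dist n x y |x y. x \<in> C \<and> y \<in> C \<and> x \<noteq> y}"
    by (rule finite_subset[of _ "{..n}"]) (auto simp: pair_dist_le)
qed (use assms in blast)+

lemma pair_weight_le_degree_plus_2:
  assumes "degree c + 1 < n"
  shows "pair_weight n c \<le> degree c + 2"
proof -
  have "{i. i < n \<and> (coeff c i, coeff c (Suc i mod n)) \<noteq> (0, 0)} \<subseteq> insert (n - 1) {..degree c}"
    using assms by (auto simp: mod_Suc dest!: le_degree)
  then have "pair_weight n c \<le> card (insert (n - 1) {..degree c})"
    unfolding pair_weight_def by (rule card_mono[rotated]) simp
  also have "\<dots> \<le> degree c + 2"
    by (simp add: card_insert_if)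
  finally show ?thesis .
qed

lemma degree_monom_minus_one:
  assumes "0 < n"
  shows "degree (monom 1 n - 1 :: 'a::comm_ring_1 poly) = n"
proof -
  have "degree (monom 1 n + (- 1) :: 'a poly) = n"
    using assms by (subst degree_add_eq_left) (simp_all add: degree_monom_eq)
  then show ?thesis
    by simp
qed

lemma monom_minus_one_neq_0:
  assumes "0 < n"
  shows "monom 1 n - 1 \<noteq> (0 :: 'a::comm_ring_1 poly)"
  using degree_monom_minus_one[OF assms, where 'a = 'a] assms by auto

lemma cyclic_code_iff:
  fixes g :: "'a::field poly"
  assumes "g dvd monom 1 n - 1" and "0 < n"
  shows "c \<in> cyclic_code n g \<longleftrightarrow> degree c < n \<and> g dvd c"
proof
  assume "c \<in> cyclic_code n g"
  then obtain a where c: "c = (a * g) mod (monom 1 n - 1)"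
    unfolding cyclic_code_def by blast
  have "c = 0 \<or> degree c < n"
    using degree_mod_less[OF monom_minus_one_neq_0[OF assms(2)], of "a * g"] assms(2)
    by (simp add: c degree_monom_minus_one)
  then show "degree c < n \<and> g dvd c"
    using assms(2) by (auto simp: c dvd_mod_iff[OF assms(1)])
next
  assume "degree c < n \<and> g dvd c"
  then have "c = (c div g * g) mod (monom 1 n - 1)"
    using assms(2) by (simp add: mod_poly_less degree_monom_minus_one)
  then show "c \<in> cyclic_code n g"
    unfolding cyclic_code_def by blast
qed

lemma card_cyclic_code:
  fixes g :: "'a::{field,finite} poly"
  assumes "g dvd monom 1 n - 1" and "degree g < n"
  shows "card (cyclic_code n g) = CARD('a) ^ (n - degree g)"
proof -
  have "g \<noteq> 0"
    using assms monom_minus_one_neq_0[of n, where 'a = 'a] by auto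
  have "cyclic_code n g = (\<lambda>x. x * g) ` {x. degree x < n - degree g}"
  proof safe
    fix c
    assume "c \<in> cyclic_code n g"
    then have "degree c < n" and "g dvd c"
      using assms cyclic_code_iff by auto
    then obtain x where c: "c = x * g"
      by (metis dvdE mult.commute)
    then have "degree x < n - degree g"
      using \<open>degree c < n\<close> \<open>g \<noteq> 0\<close> assms(2) by (cases "x = 0") (auto simp: degree_mult_eq)
    then show "c \<in> (\<lambda>x. x * g) ` {x. degree x < n - degree g}"
      using c by blast
  next
    fix x :: "'a poly"
    assume "degree x < n - degree g"
    then have "degree (x * g) < n"
      using \<open>g \<noteq> 0\<close> assms(2) by (cases "x = 0") (auto simp: degree_mult_eq)
    then show "x * g \<in> cyclic_code n g"
      using assms by (simp add: cyclic_code_iff)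
  qed
  moreover have "inj_on (\<lambda>x. x * g) {x. degree x < n - degree g}"
    using \<open>g \<noteq> 0\<close> by (auto intro: inj_onI)
  ultimately show ?thesis
    using assms(2) by (simp add: card_image card_polys_degree_less)
qed

section \<open>Cyclic shifts\<close>

text \<open>For degree c < n this is x * c reduced modulo x^n - 1, i.e. the rotation of the
  coefficient vector by one place.\<close>

definition cyclic_shift :: "nat \<Rightarrow> 'a::comm_ring_1 poly \<Rightarrow> 'a poly" where
  "cyclic_shift n c = monom 1 1 * c - smult (coeff c (n - 1)) (monom 1 n - 1)"

lemma coeff_cyclic_shift:
  assumes "degree c < n" and "j < n"
  shows "coeff (cyclic_shift n c) (Suc j mod n) = coeff c j"
proof (cases "Suc j < n")
  case True
  then show ?thesis
    by (simp add: cyclic_shift_def coeff_monom_mult)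
next
  case False
  then have "Suc j = n"
    using assms(2) by simp
  then show ?thesis
    by (auto simp: cyclic_shift_def coeff_monom_mult)
qed

lemma degree_cyclic_shift_less:
  assumes "degree c < n"
  shows "degree (cyclic_shift n c) < n"
proof -
  have "coeff (cyclic_shift n c) i = 0" if "n - 1 < i" for i
    using assms that by (auto simp: cyclic_shift_def coeff_monom_mult coeff_eq_0)
  then have "degree (cyclic_shift n c) \<le> n - 1"
    by (rule degree_le[rule_format])
  then show ?thesis
    using assms by linarith
qed

lemma cyclic_shift_in_cyclic_code:
  fixes g :: "'a::field poly"
  assumes "g dvd monom 1 n - 1" and "0 < n" and "c \<in> cyclic_code n g"
  shows "cyclic_shift n c \<in> cyclic_code n g"
  using assms degree_cyclic_shift_less
  by (auto simp: cyclic_code_iff cyclic_shift_def intro!: dvd_diff dvd_mult dvd_smult)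

lemma bij_betw_Suc_mod: "bij_betw (\<lambda>j. Suc j mod n) {..<n} {..<n}"
proof -
  have "inj_on (\<lambda>j. Suc j mod n) {..<n}"
    by (auto simp: inj_on_def mod_Suc split: if_splits)
  moreover have "(\<lambda>j. Suc j mod n) ` {..<n} = {..<n}"
    using calculation by (intro endo_inj_surj) auto
  ultimately show ?thesis
    unfolding bij_betw_def ..
qed

lemma pair_weight_cyclic_shift:
  assumes "degree c < n"
  shows "pair_weight n (cyclic_shift n c) = pair_weight n c"
proof -
  have "bij_betw (\<lambda>j. Suc j mod n)
      {j \<in> {..<n}. (coeff c j, coeff c (Suc j mod n)) \<noteq> (0, 0)}
      {i \<in> {..<n}. (coeff (cyclic_shift n c) i, coeff (cyclic_shift n c) (Suc i mod n)) \<noteq> (0, 0)}"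
    using assms by (intro bij_betw_Collect[OF bij_betw_Suc_mod]) (simp add: coeff_cyclic_shift)
  then show ?thesis
    unfolding pair_weight_def by (simp add: bij_betw_same_card)
qed

lemma cyclic_shift_iterate:
  assumes "degree c < n"
  shows "degree ((cyclic_shift n ^^ k) c) < n
    \<and> pair_weight n ((cyclic_shift n ^^ k) c) = pair_weight n c
    \<and> (\<forall>j<n. coeff ((cyclic_shift n ^^ k) c) ((j + k) mod n) = coeff c j)"
proof (induction k)
  case (Suc k)
  let ?d = "(cyclic_shift n ^^ k) c"
  have "coeff (cyclic_shift n ?d) ((j + Suc k) mod n) = coeff c j" if "j < n" for j
  proof -
    have "(j + Suc k) mod n = Suc ((j + k) mod n) mod n"
      by (simp add: mod_Suc_eq)
    then show ?thesis
      using Suc that by (simp add: coeff_cyclic_shift)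
  qed
  then show ?case
    using Suc by (simp add: degree_cyclic_shift_less pair_weight_cyclic_shift)
qed (use assms in simp)

lemma cyclic_code_shift_to_zero_coeff:
  fixes g :: "'a::field poly"
  assumes "g dvd monom 1 n - 1" and "c \<in> cyclic_code n g" and "c \<noteq> 0"
    and "pair_weight n c < n"
  obtains q where "q \<in> cyclic_code n g" and "q \<noteq> 0" and "coeff q 0 = 0"
    and "pair_weight n q = pair_weight n c"
proof -
  have "0 < n"
    using assms(4) by simp
  have "degree c < n"
    using assms(1,2) \<open>0 < n\<close> cyclic_code_iff by blast
  have "\<not> {..<n} \<subseteq> {i. i < n \<and> (coeff c i, coeff c (Suc i mod n)) \<noteq> (0, 0)}"
  proof
    assume "{..<n} \<subseteq> {i. i < n \<and> (coeff c i, coeff c (Suc i mod n)) \<noteq> (0, 0)}"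
    from card_mono[OF _ this] have "n \<le> pair_weight n c"
      unfolding pair_weight_def by simp
    with assms(4) show False
      by simp
  qed
  then obtain j where "j < n" and "coeff c j = 0"
    by auto
  define q where "q = (cyclic_shift n ^^ (n - j)) c"
  have shifted: "degree q < n" "pair_weight n q = pair_weight n c"
    "\<And>i. i < n \<Longrightarrow> coeff q ((i + (n - j)) mod n) = coeff c i"
    using cyclic_shift_iterate[OF \<open>degree c < n\<close>, of "n - j"] unfolding q_def by auto
  have "(cyclic_shift n ^^ k) c \<in> cyclic_code n g" for k
    by (induction k) (simp_all add: assms cyclic_shift_in_cyclic_code \<open>0 < n\<close>)
  then have "q \<in> cyclic_code n g"
    unfolding q_def .
  moreover have "coeff q 0 = 0"
    using shifted(3)[OF \<open>j < n\<close>] \<open>j < n\<close> \<open>coeff c j = 0\<close> by simp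
  moreover have "q \<noteq> 0"
  proof
    assume "q = 0"
    then have "coeff c (degree c) = 0"
      using shifted(3)[OF \<open>degree c < n\<close>] by simp
    then show False
      using assms(3) by simp
  qed
  ultimately show ?thesis
    using that shifted(2) by blast
qed

section \<open>Sets of naturals with few pair positions\<close>

definition pair_support :: "nat set \<Rightarrow> nat set" where
  "pair_support T = {i. i \<in> T \<or> Suc i \<in> T}"

text \<open>Once c has constant coefficient 0, the wrap-around pair (c_(n-1), c_0) behaves like
  (c_(n-1), c_n), so the pair weight no longer sees the cyclic structure.\<close>

lemma pair_weight_eq_card_pair_support:
  assumes "degree c < n" and "coeff c 0 = 0"
  shows "pair_weight n c = card (pair_support {i. coeff c i \<noteq> 0})"
proof -
  have next_coeff: "coeff c (Suc i mod n) = coeff c (Suc i)" if "i < n" for i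
    using that assms by (cases "Suc i = n") (auto simp: coeff_eq_0)
  have "{i. coeff c i \<noteq> 0} \<subseteq> {..<n}"
    using assms(1) le_degree by fastforce
  then have "pair_support {i. coeff c i \<noteq> 0} \<subseteq> {..<n}"
    by (auto simp: pair_support_def)
  then have "{i. i < n \<and> (coeff c i, coeff c (Suc i mod n)) \<noteq> (0, 0)}
      = pair_support {i. coeff c i \<noteq> 0}"
    using next_coeff by (auto simp: pair_support_def)
  then show ?thesis
    unfolding pair_weight_def by simp
qed

lemma finite_pair_support:
  assumes "finite T"
  shows "finite (pair_support T)"
proof -
  have "pair_support T = T \<union> Suc -` T"
    by (auto simp: pair_support_def)
  then show ?thesis
    using assms by (simp add: finite_vimageI)
qed

lemma card_lt_card_pair_support:
  assumes "finite T" and "T \<noteq> {}" and "0 \<notin> T"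
  shows "card T < card (pair_support T)"
proof (rule psubset_card_mono[OF finite_pair_support[OF assms(1)]])
  have "Min T \<in> T" and "Min T \<noteq> 0"
    using assms by auto
  then have "Min T - 1 \<in> pair_support T - T"
    using Min_le[OF assms(1), of "Min T - 1"] by (auto simp: pair_support_def)
  then show "T \<subset> pair_support T"
    by (auto simp: pair_support_def)
qed

lemma six_le_card_pair_support:
  fixes a b c d e f :: nat
  assumes "finite T" and "a < b" "b < c" "c < d" "d < e" "e < f"
    and "{a, b, c, d, e, f} \<subseteq> pair_support T"
  shows "6 \<le> card (pair_support T)"
proof -
  have "distinct [a, b, c, d, e, f]"
    using assms(2-6) by auto
  then have "card {a, b, c, d, e, f} = 6"
    using distinct_card by fastforce
  then show ?thesis
    using card_mono[OF finite_pair_support[OF assms(1)] assms(7)] by simp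
qed

lemma pair_support_three_cases:
  assumes "x < y" and "y < w" and "x \<noteq> 0" and "card (pair_support {x, y, w}) \<le> 5"
  obtains (short) "w \<le> x + 3"
    | (adjacent_pair) s t where "s \<noteq> t" and "s \<noteq> Suc t" and "{x, y, w} = {s, t, Suc t}"
proof -
  consider "w \<le> x + 3" | "y = Suc x" "x + 3 < w" | "w = Suc y" | "y \<noteq> Suc x" "w \<noteq> Suc y"
    by linarith
  then show ?thesis
  proof cases
    case 1
    then show ?thesis
      by (rule short)
  next
    case 2
    then show ?thesis
      by (intro adjacent_pair[of w x]) auto
  next
    case 3
    then show ?thesis
      using assms(1) by (intro adjacent_pair[of x y]) auto
  next
    case 4
    have "6 \<le> card (pair_support {x, y, w})"
      using 4 assms(1-3)
      by (intro six_le_card_pair_support[of _ "x - 1" x "y - 1" y "w - 1" w]) (auto simp: pair_support_def)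
    with assms(4) show ?thesis
      by simp
  qed
qed

lemma pair_support_four_window:
  assumes "x < y" and "y < w" and "w < v" and "x \<noteq> 0"
    and "card (pair_support {x, y, w, v}) \<le> 5"
  shows "v \<le> x + 3"
proof (rule ccontr)
  assume far: "\<not> v \<le> x + 3"
  consider "y \<noteq> Suc x" | "y = Suc x" "w \<noteq> Suc y" | "y = Suc x" "w = Suc y"
    by blast
  then have "6 \<le> card (pair_support {x, y, w, v})"
  proof cases
    case 1
    then show ?thesis
      using assms(1-4)
      by (intro six_le_card_pair_support[of _ "x - 1" x "y - 1" y w v]) (auto simp: pair_support_def)
  next
    case 2
    then show ?thesis
      using assms(1-4)
      by (intro six_le_card_pair_support[of _ "x - 1" x y "w - 1" w v]) (auto simp: pair_support_def)
  next
    case 3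
    then show ?thesis
      using assms(4) far
      by (intro six_le_card_pair_support[of _ "x - 1" x y w "v - 1" v]) (auto simp: pair_support_def)
  qed
  with assms(5) show False
    by simp
qed

lemma small_pair_support_cases:
  assumes "finite T" and "T \<noteq> {}" and "0 \<notin> T" and "card (pair_support T) \<le> 5"
  obtains (window) b where "T \<subseteq> {b..<b + 4}"
    | (two) u v where "u < v" and "T = {u, v}"
    | (three) s t where "s \<noteq> t" and "s \<noteq> Suc t" and "T = {s, t, Suc t}"
proof -
  define xs where "xs = sorted_list_of_set T"
  have xs: "sorted_wrt (<) xs" "set xs = T" "length xs = card T"
    using assms(1) by (simp_all add: xs_def)
  have "card T \<le> 4"
    using card_lt_card_pair_support[OF assms(1-3)] assms(4) by simp
  moreover have "card T \<noteq> 0"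
    using assms(1,2) by simp
  ultimately consider "card T = 1" | "card T = 2" | "card T = 3" | "card T = 4"
    by linarith
  then show ?thesis
  proof cases
    case 1
    then obtain x where "T = {x}"
      using card_1_singletonE by blast
    then show ?thesis
      by (intro window[of x]) simp
  next
    case 2
    then obtain x y where "xs = [x, y]"
      using xs(3) by (auto simp: numeral_eq_Suc length_Suc_conv)
    then show ?thesis
      using xs(1,2) two by auto
  next
    case 3
    then obtain x y w where "xs = [x, y, w]"
      using xs(3) by (auto simp: numeral_eq_Suc length_Suc_conv)
    then have T: "T = {x, y, w}" and "x < y" "y < w" and "x \<noteq> 0"
      using xs(1,2) assms(3) by auto
    from assms(4) T have "card (pair_support {x, y, w}) \<le> 5"
      by simp
    with \<open>x < y\<close> \<open>y < w\<close> \<open>x \<noteq> 0\<close> show ?thesis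
    proof (cases rule: pair_support_three_cases)
      case short
      then show ?thesis
        using T \<open>x < y\<close> \<open>y < w\<close> by (intro window[of x]) auto
    next
      case (adjacent_pair s t)
      then show ?thesis
        using T by (intro three[of s t]) auto
    qed
  next
    case 4
    then obtain x y w v where "xs = [x, y, w, v]"
      using xs(3) by (auto simp: numeral_eq_Suc length_Suc_conv)
    then have T: "T = {x, y, w, v}" and "x < y" "y < w" "w < v" and "x \<noteq> 0"
      using xs(1,2) assms(3) by auto
    with assms(4) have "v \<le> x + 3"
      by (intro pair_support_four_window) auto
    then show ?thesis
      using T \<open>x < y\<close> \<open>y < w\<close> \<open>w < v\<close> by (intro window[of x]) auto
  qed
qed

section \<open>Sparse multiples of a divisor of x^n - 1\<close>

lemma poly_as_sum_of_monoms_subset: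
  assumes "finite S" and "{i. coeff q i \<noteq> 0} \<subseteq> S"
  shows "(\<Sum>i\<in>S. monom (coeff q i) i) = q"
  using assms by (intro poly_eqI) (auto simp: coeff_sum)

lemma dvd_monom_mult_cancel:
  fixes g :: "'a::comm_ring_1 poly"
  assumes "g dvd monom 1 n - 1" and "0 < n" and "g dvd monom 1 k * r"
  shows "g dvd r"
proof -
  have cancel_x: "g dvd s" if "g dvd monom 1 1 * s" for s
  proof -
    \<comment> \<open>x is invertible modulo x^n - 1, with inverse x^(n - 1)\<close>
    have "monom 1 (n - 1) * monom 1 1 = (monom 1 n :: 'a poly)"
      using assms(2) by (simp add: mult_monom)
    then have "monom 1 (n - 1) * (monom 1 1 * s) - (monom 1 n - 1) * s = s"
      by (simp add: mult.assoc[symmetric] left_diff_distrib)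
    moreover have "g dvd monom 1 (n - 1) * (monom 1 1 * s) - (monom 1 n - 1) * s"
      by (rule dvd_diff[OF dvd_mult[OF that] dvd_mult2[OF assms(1)]])
    ultimately show ?thesis
      by simp
  qed
  from assms(3) show ?thesis
  proof (induction k arbitrary: r)
    case (Suc k)
    have "monom 1 (Suc k) = monom 1 k * (monom 1 1 :: 'a poly)"
      by (simp add: mult_monom)
    with Suc.prems have "g dvd monom 1 k * (monom 1 1 * r)"
      by (simp add: mult.assoc)
    then show ?case
      using Suc.IH cancel_x by blast
  qed simp
qed

lemma multiple_in_short_window_eq_0:
  fixes g q :: "'a::field poly"
  assumes "g dvd monom 1 n - 1" and "0 < n" and "g dvd q"
    and "{i. coeff q i \<noteq> 0} \<subseteq> {b..<b + degree g}"
  shows "q = 0"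
proof -
  have q: "monom 1 b * poly_shift b q = q"
    using assms(4) by (intro poly_eqI) (auto simp: coeff_monom_mult coeff_poly_shift)
  then have "g dvd poly_shift b q"
    using assms(1-3) dvd_monom_mult_cancel by metis
  have "poly_shift b q = 0"
  proof (rule ccontr)
    assume nz: "poly_shift b q \<noteq> 0"
    then have "coeff q (degree (poly_shift b q) + b) \<noteq> 0"
      by (simp add: coeff_poly_shift[symmetric])
    then have "degree (poly_shift b q) < degree g"
      using assms(4) by auto
    with dvd_imp_degree_le[OF \<open>g dvd poly_shift b q\<close> nz] show False
      by simp
  qed
  then show ?thesis
    using q by simp
qed

lemma dvd_binomial_if_support_two:
  fixes g q :: "'a::field poly"
  assumes "g dvd monom 1 n - 1" and "0 < n" and "g dvd q"
    and "{i. coeff q i \<noteq> 0} \<subseteq> {u, v}" and "u < v"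
  shows "g dvd [:coeff q u:] + monom (coeff q v) (v - u)"
proof -
  have "monom 1 u * ([:coeff q u:] + monom (coeff q v) (v - u)) = monom (coeff q u) u + monom (coeff q v) v"
    using assms(5) by (simp add: distrib_left mult_monom monom_0[symmetric])
  also have "\<dots> = q"
    using poly_as_sum_of_monoms_subset[OF _ assms(4)] assms(5) by simp
  finally show ?thesis
    using assms(1-3) dvd_monom_mult_cancel by metis
qed

lemma trinomial_roots_one_neg_one:
  fixes q :: "'a::field poly"
  assumes "{i. coeff q i \<noteq> 0} \<subseteq> {s, t, Suc t}" and "s \<noteq> t" and "s \<noteq> Suc t"
    and "poly q 1 = 0" and "poly q (-1) = 0" and "(2::'a) \<noteq> 0"
  shows "coeff q t = 0 \<or> coeff q (Suc t) = 0"
proof -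
  define x y z where "x = coeff q s" and "y = coeff q t" and "z = coeff q (Suc t)"
  have q: "monom x s + monom y t + monom z (Suc t) = q"
    using poly_as_sum_of_monoms_subset[OF _ assms(1)] assms(2,3)
    by (simp add: x_def y_def z_def add.assoc)
  have sum: "x + y + z = 0"
    using assms(4) by (simp flip: q add: poly_monom)
  have "(-1) ^ s * ((-1) ^ s * x + (-1) ^ t * (y - z)) = 0"
    using assms(5) by (simp flip: q add: poly_monom algebra_simps)
  then have alt: "x + (-1) ^ (s + t) * (y - z) = 0"
    by (simp add: distrib_left power_add mult.assoc)
  show ?thesis
  proof (cases "even (s + t)")
    case True
    with alt have "x + (y - z) = 0"
      by simp
    with sum have "2 * z = 0"
      by algebra
    then show ?thesis
      using assms(6) by (simp add: z_def)
  next
    case False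
    with alt have "x + (z - y) = 0"
      by simp
    with sum have "2 * y = 0"
      by algebra
    then show ?thesis
      using assms(6) by (simp add: y_def)
  qed
qed

section \<open>Cyclic codes with a degree-4 generator\<close>

lemma six_le_pair_weight:
  fixes g :: "'a::field poly"
  assumes gN: "g dvd monom 1 n - 1" and deg: "degree g = 4" and "5 < n"
    and roots: "poly g 1 = 0" "poly g (-1) = 0" and two_neq_0: "(2::'a) \<noteq> 0"
    and no_binomial: "\<And>c0 c1 d. g dvd [:c0:] + monom c1 d \<Longrightarrow> 0 < d \<Longrightarrow> d < n \<Longrightarrow> c1 = 0"
    and "c \<in> cyclic_code n g" and "c \<noteq> 0"
  shows "6 \<le> pair_weight n c"
proof (rule ccontr)
  assume "\<not> 6 \<le> pair_weight n c"
  then have "pair_weight n c \<le> 5" and "pair_weight n c < n"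
    using \<open>5 < n\<close> by simp_all
  then obtain q where "q \<in> cyclic_code n g" and "q \<noteq> 0" and "coeff q 0 = 0"
    and "pair_weight n q \<le> 5"
    using cyclic_code_shift_to_zero_coeff[OF gN \<open>c \<in> cyclic_code n g\<close> \<open>c \<noteq> 0\<close>]
    by metis
  then have "degree q < n" and "g dvd q"
    using gN \<open>5 < n\<close> cyclic_code_iff by auto
  define T where "T = {i. coeff q i \<noteq> 0}"
  have "finite T"
    unfolding T_def by (rule finite_subset[of _ "{..degree q}"]) (auto intro: le_degree)
  moreover have "T \<noteq> {}" and "0 \<notin> T"
    using \<open>q \<noteq> 0\<close> \<open>coeff q 0 = 0\<close> by (auto simp: T_def poly_eq_iff)
  moreover have "card (pair_support T) \<le> 5"
    using \<open>pair_weight n q \<le> 5\<close> pair_weight_eq_card_pair_support[OF \<open>degree q < n\<close> \<open>coeff q 0 = 0\<close>]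
    by (simp add: T_def)
  ultimately show False
  proof (cases rule: small_pair_support_cases)
    case (window b)
    then have "q = 0"
      using multiple_in_short_window_eq_0[OF gN _ \<open>g dvd q\<close>, of b] deg \<open>5 < n\<close>
      by (auto simp: T_def)
    with \<open>q \<noteq> 0\<close> show False ..
  next
    case (two u v)
    then have "g dvd [:coeff q u:] + monom (coeff q v) (v - u)"
      using \<open>g dvd q\<close> \<open>5 < n\<close> by (intro dvd_binomial_if_support_two[OF gN]) (auto simp: T_def)
    moreover have "coeff q v \<noteq> 0"
      using two by (auto simp: T_def)
    moreover from this have "v < n"
      using le_degree[of q v] \<open>degree q < n\<close> by simp
    ultimately show False
      using no_binomial[of "coeff q u" "coeff q v" "v - u"] \<open>u < v\<close> by simp
  next
    case (three s t)
    have "poly q 1 = 0" and "poly q (-1) = 0"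
      using \<open>g dvd q\<close> roots by (auto simp: dvd_def)
    then have "coeff q t = 0 \<or> coeff q (Suc t) = 0"
      using three two_neq_0 by (intro trinomial_roots_one_neg_one) (auto simp: T_def)
    with three show False
      by (auto simp: T_def)
  qed
qed

theorem mds_pair_code_degree_4:
  fixes g :: "'a::{field,finite} poly"
  assumes gN: "g dvd monom 1 n - 1" and deg: "degree g = 4" and "5 < n"
    and "poly g 1 = 0" "poly g (-1) = 0" and "(2::'a) \<noteq> 0"
    and "\<And>c0 c1 d. g dvd [:c0:] + monom c1 d \<Longrightarrow> 0 < d \<Longrightarrow> d < n \<Longrightarrow> c1 = 0"
  shows "mds_pair_code n (cyclic_code n g) \<and> min_pair_dist n (cyclic_code n g) = 6"
proof -
  let ?C = "cyclic_code n g"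
  have weight: "6 \<le> pair_weight n c" if "c \<in> ?C" and "c \<noteq> 0" for c
    using six_le_pair_weight[OF assms that] .
  have code_iff: "c \<in> ?C \<longleftrightarrow> degree c < n \<and> g dvd c" for c
    using gN \<open>5 < n\<close> by (simp add: cyclic_code_iff)
  have "g \<in> ?C" and "0 \<in> ?C" and "g \<noteq> 0"
    using deg \<open>5 < n\<close> by (auto simp: code_iff)
  have "pair_dist n g 0 = 6"
    using weight[OF \<open>g \<in> ?C\<close> \<open>g \<noteq> 0\<close>] pair_weight_le_degree_plus_2[of g n] deg \<open>5 < n\<close>
    by (simp add: pair_dist_eq_pair_weight_diff)
  have "min_pair_dist n ?C = 6"
  proof (rule min_pair_dist_eqI[OF _ \<open>g \<in> ?C\<close> \<open>0 \<in> ?C\<close> \<open>g \<noteq> 0\<close> \<open>pair_dist n g 0 = 6\<close>])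
    fix x y
    assume "x \<in> ?C" "y \<in> ?C" "x \<noteq> y"
    then have "x - y \<in> ?C"
      by (simp add: code_iff degree_diff_less)
    with \<open>x \<noteq> y\<close> show "6 \<le> pair_dist n x y"
      by (simp add: pair_dist_eq_pair_weight_diff weight)
  qed
  moreover have "card ?C = CARD('a) ^ (n - 6 + 2)"
  proof -
    have "n - 6 + 2 = n - degree g"
      using deg \<open>5 < n\<close> by simp
    then show ?thesis
      using card_cyclic_code[OF gN] deg \<open>5 < n\<close> by simp
  qed
  ultimately show ?thesis
    by (simp add: mds_pair_code_def)
qed

section \<open>Generators with one double and two simple roots\<close>

lemma square_linear_dvd_iff:
  fixes q :: "'a::idom poly"
  shows "[:-a, 1:] ^ 2 dvd q \<longleftrightarrow> poly q a = 0 \<and> poly (pderiv q) a = 0"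
proof
  assume "[:-a, 1:] ^ 2 dvd q"
  then obtain r where "q = [:-a, 1:] ^ 2 * r" ..
  then show "poly q a = 0 \<and> poly (pderiv q) a = 0"
    by (simp add: pderiv_mult pderiv_power_Suc numeral_2_eq_2 pderiv_pCons
        del: mult_pCons_left mult_pCons_right)
next
  assume roots: "poly q a = 0 \<and> poly (pderiv q) a = 0"
  then have "[:-a, 1:] dvd q"
    by (simp add: poly_eq_0_iff_dvd)
  then obtain r where q: "q = [:-a, 1:] * r" ..
  have "poly (pderiv q) a = poly r a"
    by (simp add: q pderiv_mult pderiv_pCons del: mult_pCons_left mult_pCons_right)
  then have "[:-a, 1:] dvd r"
    using roots by (simp add: poly_eq_0_iff_dvd)
  then show "[:-a, 1:] ^ 2 dvd q"
    unfolding q power2_eq_square by (rule mult_dvd_mono[OF dvd_refl])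
qed

lemma double_root_dvd_iff:
  fixes a s t :: "'a::idom"
  assumes "distinct [a, s, t]"
  shows "[:-a, 1:] ^ 2 * [:-s, 1:] * [:-t, 1:] dvd q \<longleftrightarrow>
    poly q a = 0 \<and> poly (pderiv q) a = 0 \<and> poly q s = 0 \<and> poly q t = 0"
proof
  assume dvd: "[:-a, 1:] ^ 2 * [:-s, 1:] * [:-t, 1:] dvd q"
  have "[:-a, 1:] ^ 2 dvd q" and "[:-s, 1:] dvd q" and "[:-t, 1:] dvd q"
    using dvd_mult_left[OF dvd_mult_left[OF dvd]] dvd_mult_right[OF dvd_mult_left[OF dvd]]
      dvd_mult_right[OF dvd] .
  then show "poly q a = 0 \<and> poly (pderiv q) a = 0 \<and> poly q s = 0 \<and> poly q t = 0"
    using square_linear_dvd_iff[of a q] poly_eq_0_iff_dvd[of q s] poly_eq_0_iff_dvd[of q t] by blast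
next
  assume roots: "poly q a = 0 \<and> poly (pderiv q) a = 0 \<and> poly q s = 0 \<and> poly q t = 0"
  have "[:-a, 1:] ^ 2 dvd q"
    using roots by (simp add: square_linear_dvd_iff)
  then obtain r where r: "q = [:-a, 1:] ^ 2 * r" ..
  have "poly q s = poly [:-a, 1:] s ^ 2 * poly r s"
    by (simp only: r poly_mult poly_power)
  then have "[:-s, 1:] dvd r"
    using roots assms by (auto simp flip: poly_eq_0_iff_dvd)
  then obtain r' where r': "r = [:-s, 1:] * r'" ..
  have "poly q t = poly [:-a, 1:] t ^ 2 * poly [:-s, 1:] t * poly r' t"
    by (simp only: r r' poly_mult poly_power mult.assoc)
  then have "[:-t, 1:] dvd r'"
    using roots assms by (auto simp flip: poly_eq_0_iff_dvd)
  then obtain r'' where "r' = [:-t, 1:] * r''" ..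
  then have "q = [:-a, 1:] ^ 2 * [:-s, 1:] * [:-t, 1:] * r''"
    by (simp only: r r' mult.assoc)
  then show "[:-a, 1:] ^ 2 * [:-s, 1:] * [:-t, 1:] dvd q" ..
qed

lemma power_eq_one_if_binomial_roots:
  fixes z c0 c1 :: "'a::idom"
  assumes "poly ([:c0:] + monom c1 d) 1 = 0" and "poly ([:c0:] + monom c1 d) z = 0"
    and "c1 \<noteq> 0"
  shows "z ^ d = 1"
proof -
  have "c0 = - c1"
    using assms(1) by (simp add: poly_monom eq_neg_iff_add_eq_0)
  then have "c1 * (z ^ d - 1) = 0"
    using assms(2) by (simp add: poly_monom algebra_simps)
  then show ?thesis
    using assms(3) by simp
qed

lemma of_nat_eq_0_if_binomial_double_root:
  fixes a c0 c1 :: "'a::idom"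
  assumes "poly (pderiv ([:c0:] + monom c1 d)) a = 0" and "a \<noteq> 0" and "c1 \<noteq> 0"
  shows "of_nat d = (0::'a)"
  using assms by (simp add: pderiv_add pderiv_monom poly_monom)

theorem mds_pair_code_double_root:
  fixes a s t :: "'a::{field,finite}"
  assumes "distinct [a, s, t]" and "1 \<in> {a, s, t}" and "-1 \<in> {a, s, t}" and "(2::'a) \<noteq> 0"
    and period: "\<And>d. n dvd d \<longleftrightarrow> (\<forall>z\<in>{a, s, t}. z ^ d = 1) \<and> of_nat d = (0::'a)"
    and "5 < n"
  shows "mds_pair_code n (cyclic_code n ([:-a, 1:] ^ 2 * [:-s, 1:] * [:-t, 1:]))
    \<and> min_pair_dist n (cyclic_code n ([:-a, 1:] ^ 2 * [:-s, 1:] * [:-t, 1:])) = 6"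
proof (rule mds_pair_code_degree_4)
  let ?g = "[:-a, 1:] ^ 2 * [:-s, 1:] * [:-t, 1:]"
  note dvd_iff = double_root_dvd_iff[OF assms(1)]
  have roots_n: "\<forall>z\<in>{a, s, t}. z ^ n = 1" and "of_nat n = (0::'a)"
    using period[of n] by simp_all
  then show "?g dvd monom 1 n - 1"
    unfolding dvd_iff by (simp add: poly_monom pderiv_diff pderiv_monom)
  show "degree ?g = 4"
    by (simp add: degree_mult_eq degree_power_eq del: mult_pCons_left mult_pCons_right)
  show "poly ?g 1 = 0" and "poly ?g (-1) = 0"
    using assms(2,3) by (auto simp del: mult_pCons_left mult_pCons_right)
  show "c1 = 0" if "?g dvd [:c0:] + monom c1 d" and "0 < d" and "d < n" for c0 c1 d
  proof (rule ccontr)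
    assume "c1 \<noteq> 0"
    let ?r = "[:c0:] + monom c1 d"
    from that(1) have r: "poly ?r a = 0" "poly (pderiv ?r) a = 0" "poly ?r s = 0" "poly ?r t = 0"
      unfolding dvd_iff by auto
    then have "poly ?r 1 = 0"
      using assms(2) by auto
    then have "\<forall>z\<in>{a, s, t}. z ^ d = 1"
      using r power_eq_one_if_binomial_roots \<open>c1 \<noteq> 0\<close> by blast
    moreover have "a \<noteq> 0"
      using roots_n \<open>5 < n\<close> by (auto simp: power_0_left)
    then have "of_nat d = (0::'a)"
      using of_nat_eq_0_if_binomial_double_root[OF r(2)] \<open>c1 \<noteq> 0\<close> by blast
    ultimately have "n dvd d"
      using period by blast
    with that(2,3) show False
      by (simp add: nat_dvd_not_less)
  qed
qed (use assms in simp_all)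

lemma of_nat_CARD_eq_0: "of_nat CARD('a::{ring_1,finite}) = (0::'a)"
proof -
  have "(\<Sum>x\<in>UNIV. x + 1) = (\<Sum>x\<in>UNIV. x :: 'a)"
    by (rule sum.reindex_bij_witness[of _ "\<lambda>x. x - 1" "\<lambda>x. x + 1"]) auto
  then show ?thesis
    by (simp add: sum.distrib)
qed

lemma CHAR_eq_CARD_if_prime:
  assumes "prime CARD('a::{ring_1,finite})"
  shows "CHAR('a) = CARD('a)"
proof -
  have "CHAR('a) dvd CARD('a)"
    using of_nat_CARD_eq_0[where 'a = 'a] by (simp add: of_nat_eq_0_iff_char_dvd)
  then show ?thesis
    using assms CHAR_not_1[where 'a = 'a] by (auto simp: prime_nat_iff)
qed

lemma primitive_root_of_unity_power_eq_1_iff: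
  assumes "primitive_root_of_unity l w"
  shows "w ^ d = 1 \<longleftrightarrow> l dvd d"
proof
  have "w ^ l = 1" and "0 < l" and minimal: "\<And>k. 0 < k \<Longrightarrow> k < l \<Longrightarrow> w ^ k \<noteq> 1"
    using assms by (auto simp: primitive_root_of_unity_def)
  assume "w ^ d = 1"
  moreover have "w ^ d = (w ^ l) ^ (d div l) * w ^ (d mod l)"
    by (simp flip: power_mult power_add)
  ultimately have "w ^ (d mod l) = 1"
    using \<open>w ^ l = 1\<close> by simp
  then show "l dvd d"
    using minimal[of "d mod l"] \<open>0 < l\<close> by (auto simp: dvd_eq_mod_eq_0)
next
  assume "l dvd d"
  then show "w ^ d = 1"
    using assms by (auto simp: primitive_root_of_unity_def power_mult)
qed

lemma distinct_one_neg_one_primitive_root: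
  fixes w :: "'a::field"
  assumes "primitive_root_of_unity l w" and "2 < l" and "(2::'a) \<noteq> 0"
  shows "distinct [1, -1, w]"
  using primitive_root_of_unity_power_eq_1_iff[OF assms(1), of 1]
    primitive_root_of_unity_power_eq_1_iff[OF assms(1), of 2] assms(2,3)
  by (auto dest: dvd_imp_le)

lemma one_neg_one_primitive_root_power_eq_1_iff:
  fixes w :: "'a::field"
  assumes "primitive_root_of_unity l w" and "(2::'a) \<noteq> 0"
  shows "(\<forall>z\<in>{1, -1, w}. z ^ d = 1) \<longleftrightarrow> even d \<and> l dvd d"
  using primitive_root_of_unity_power_eq_1_iff[OF assms(1)] assms(2)
  by (auto simp: minus_one_power_iff)

lemma period_dvd_iff:
  fixes p l d :: nat
  assumes "prime p" and "odd p" and "0 < l" and "l < p"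
  shows "(if even l then l * p else 2 * l * p) dvd d \<longleftrightarrow> even d \<and> l dvd d \<and> p dvd d"
proof -
  have coprime_mult_dvd_iff: "a * b dvd d \<longleftrightarrow> a dvd d \<and> b dvd d" if "coprime a b" for a b :: nat
    using that by (auto intro: divides_mult dest: dvd_mult_left dvd_mult_right)
  have "coprime l p"
    using prime_imp_coprime[OF assms(1) nat_dvd_not_less[OF assms(3,4)]] by (simp add: coprime_commute)
  show ?thesis
  proof (cases "even l")
    case True
    then show ?thesis
      using coprime_mult_dvd_iff[OF \<open>coprime l p\<close>] by (auto intro: dvd_trans)
  next
    case False
    then have "coprime 2 l" and "coprime (2 * l) p"
      using \<open>coprime l p\<close> assms(2) by auto
    then show ?thesis
      using False coprime_mult_dvd_iff by simp
  qed
qed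

lemma generator_cases:
  fixes w :: "'a::comm_ring_1"
  assumes "(r1, r2, r3) \<in> {(2, 1, 1), (1, 2, 1), (1, 1, 2)}" and "distinct [1, -1, w]"
  obtains a s t where "{a, s, t} = {1, -1, w}" and "distinct [a, s, t]"
    and "[:-1, 1:] ^ r1 * [:1, 1:] ^ r2 * [:-w, 1:] ^ r3 = [:-a, 1:] ^ 2 * [:-s, 1:] * [:-t, 1:]"
proof -
  from assms(1) consider "r1 = 2" "r2 = 1" "r3 = 1" | "r1 = 1" "r2 = 2" "r3 = 1" | "r1 = 1" "r2 = 1" "r3 = 2"
    by auto
  then show thesis
  proof cases
    case 1
    then show thesis
      using that[of 1 "-1" w] assms(2) by (simp only: power_one_right minus_minus)
  next
    case 2
    then show thesis
      using that[of "-1" 1 w] assms(2)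
      by (simp only: power_one_right minus_minus mult_ac) (auto simp: insert_commute)
  next
    case 3
    then show thesis
      using that[of w 1 "-1"] assms(2)
      by (simp only: power_one_right minus_minus mult_ac) (auto simp: insert_commute)
  qed
qed

theorem proposition3p2:
  fixes p l n r1 r2 r3 :: nat and \<omega> :: "'a::{field,finite}"
  assumes "prime p" and "odd p" and "CARD('a) = p"
    and "l > 2" and "l dvd p - 1"
    and "primitive_root_of_unity l \<omega>"
    and "n = (if even l then l * p else 2 * l * p)"
    and "(r1, r2, r3) \<in> {(2,1,1), (1,2,1), (1,1,2)}"
  shows "mds_pair_code n (cyclic_code n ([:-1, 1:] ^ r1 * [:1, 1:] ^ r2 * [:-\<omega>, 1:] ^ r3))
       \<and> min_pair_dist n (cyclic_code n ([:-1, 1:] ^ r1 * [:1, 1:] ^ r2 * [:-\<omega>, 1:] ^ r3)) = 6"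
proof -
  have char: "of_nat d = (0::'a) \<longleftrightarrow> p dvd d" for d
    using CHAR_eq_CARD_if_prime[where 'a = 'a] assms(1,3) by (simp add: of_nat_eq_0_iff_char_dvd)
  have two: "(2::'a) \<noteq> 0"
    using char[of 2] primes_dvd_imp_eq[OF assms(1) two_is_prime_nat] assms(2) by auto
  have "l \<le> p - 1"
    using assms(5) prime_ge_2_nat[OF assms(1)] by (intro dvd_imp_le) auto
  then have "l < p"
    using prime_ge_2_nat[OF assms(1)] by linarith
  then have "5 < n"
    using assms(4,7) mult_le_mono[of 3 l 3 p] by auto
  have period: "n dvd d \<longleftrightarrow> (\<forall>z\<in>{1, -1, \<omega>}. z ^ d = 1) \<and> of_nat d = (0::'a)" for d
    using period_dvd_iff[OF assms(1,2) _ \<open>l < p\<close>] assms(4,7) char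
      one_neg_one_primitive_root_power_eq_1_iff[OF assms(6) two] by simp
  obtain a s t where "{a, s, t} = {1, -1, \<omega>}" and "distinct [a, s, t]"
    and generator: "[:-1, 1:] ^ r1 * [:1, 1:] ^ r2 * [:-\<omega>, 1:] ^ r3 = [:-a, 1:] ^ 2 * [:-s, 1:] * [:-t, 1:]"
    using generator_cases[OF assms(8) distinct_one_neg_one_primitive_root[OF assms(6,4) two]] .
  then show ?thesis
    unfolding generator using two period \<open>5 < n\<close>
    by (intro mds_pair_code_double_root) simp_all
qed

end
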